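(* Given a set of $n$ trajectories in $\mathbb{R}^1$, each piecewise linear with vertices at times $t_0,\dots,t_\tau$, a central trajectory with $\varepsilon=0$ has worst-case complexity $O(\tau n^2)$.
   Context: Setting: $\mathcal{X}$ is a set of $n$ entities moving in $\mathbb{R}^1$ along piecewise-linear trajectories with vertices at the common times $t_0<\dots<t_\tau$, in general position (no three trajectories pass through the same point at the same time). With $\varepsilon=0$, a trajectoid is a function $\mathcal{T}:[t_0,t_\tau]\to\mathcal{X}$ that may switch from $\sigma$ to $\psi$ at time $t$ only if $\sigma(t)=\psi(t)$. $D(\sigma,t)=\max_{\psi\in\mathcal{X}}|\sigma(t)-\psi(t)|$. A central trajectory is a trajectoid minimizing $\int_{t_0}^{t_\tau}D(\mathcal{T}(t),t)\,dt$. The complexity of a trajectoid is the number of pieces of the curve $t\mapsto\mathcal{T}(t)(t)$, i.e. the number of maximal time intervals on which $\mathcal{T}$ is a single entity and that entity moves linearly. *)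

theory Defs
  imports "HOL-Analysis.Analysis"
begin

(* Entities are indices 0..n-1; entity k has trajectory f k :: real => real.
   Vertex times tt 0 < ... < tt tau; the time domain is {tt 0 .. tt tau}. *)

definition valid_input :: "nat \<Rightarrow> nat \<Rightarrow> (nat \<Rightarrow> real) \<Rightarrow> (nat \<Rightarrow> real \<Rightarrow> real) \<Rightarrow> bool" where
  "valid_input n \<tau> tt f \<longleftrightarrow>
     n \<ge> 1 \<and> \<tau> \<ge> 1 \<and>
     (\<forall>i<\<tau>. tt i < tt (Suc i)) \<and>
     \<comment> \<open>piecewise linear with vertices at the common times\<close>
     (\<forall>k<n. \<forall>i<\<tau>. \<exists>m c. \<forall>t\<in>{tt i..tt (Suc i)}. f k t = m * t + c) \<and>
     \<comment> \<open>a set of n entities: distinct trajectories\<close>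
     (\<forall>i<n. \<forall>j<n. i \<noteq> j \<longrightarrow> (\<exists>t\<in>{tt 0..tt \<tau>}. f i t \<noteq> f j t)) \<and>
     \<comment> \<open>general position: no three trajectories through the same point at the same time\<close>
     (\<forall>t\<in>{tt 0..tt \<tau>}. \<forall>i<n. \<forall>j<n. \<forall>k<n.
        i \<noteq> j \<and> j \<noteq> k \<and> i \<noteq> k \<longrightarrow> \<not> (f i t = f j t \<and> f j t = f k t))"

definition Dist :: "nat \<Rightarrow> (nat \<Rightarrow> real \<Rightarrow> real) \<Rightarrow> nat \<Rightarrow> real \<Rightarrow> real" where
  "Dist n f \<sigma> t = Max ((\<lambda>\<psi>. \<bar>f \<sigma> t - f \<psi> t\<bar>) ` {..<n})"

(* Trajectoid with epsilon = 0: T maps times to entities; near every time t, every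
   entity used by T is at time t at the same position as T t, i.e. T can only switch
   from sigma to psi at a time t with sigma(t) = psi(t). *)
definition trajectoid :: "nat \<Rightarrow> real \<Rightarrow> real \<Rightarrow> (nat \<Rightarrow> real \<Rightarrow> real) \<Rightarrow> (real \<Rightarrow> nat) \<Rightarrow> bool" where
  "trajectoid n a b f T \<longleftrightarrow>
     (\<forall>t\<in>{a..b}. T t < n \<and>
        (\<exists>\<delta>>0. \<forall>s\<in>{a..b}. \<bar>s - t\<bar> < \<delta> \<longrightarrow> f (T s) t = f (T t) t))"

definition traj_cost :: "nat \<Rightarrow> real \<Rightarrow> real \<Rightarrow> (nat \<Rightarrow> real \<Rightarrow> real) \<Rightarrow> (real \<Rightarrow> nat) \<Rightarrow> real" where
  "traj_cost n a b f T = integral {a..b} (\<lambda>t. Dist n f (T t) t)"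

definition central_trajectory :: "nat \<Rightarrow> real \<Rightarrow> real \<Rightarrow> (nat \<Rightarrow> real \<Rightarrow> real) \<Rightarrow> (real \<Rightarrow> nat) \<Rightarrow> bool" where
  "central_trajectory n a b f T \<longleftrightarrow>
     trajectoid n a b f T \<and>
     (\<forall>T'. trajectoid n a b f T' \<longrightarrow> traj_cost n a b f T \<le> traj_cost n a b f T')"

(* The complexity (number of maximal
   such intervals) is the least such k. *)
definition complexity_le :: "real \<Rightarrow> real \<Rightarrow> (nat \<Rightarrow> real \<Rightarrow> real) \<Rightarrow> (real \<Rightarrow> nat) \<Rightarrow> nat \<Rightarrow> bool" where
  "complexity_le a b f T k \<longleftrightarrow>
     (\<exists>s::nat \<Rightarrow> real. s 0 = a \<and> s k = b \<and> (\<forall>j<k. s j < s (Suc j)) \<and>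
        (\<forall>j<k. \<exists>e m c. \<forall>t\<in>{s j<..<s (Suc j)}. T t = e \<and> f e t = m * t + c))"

end

theory Submission
  imports Defs
begin

text \<open>Cut \<open>[t\<^sub>0, t\<^sub>\<tau>]\<close> at the vertex times and at every crossing of two trajectories on a
  piece where they do not coincide: at most \<open>\<tau> + 1 + \<tau> n\<^sup>2\<close> event times. Inside a cell between
  consecutive events two entities either coincide or never meet, so by connectedness a trajectoid
  follows a single curve on each cell. Hence its cost only depends on one choice of entity per
  cell, a minimiser exists among the finitely many costs, and redirecting a minimiser to one fixed
  entity on each open cell keeps it a trajectoid of the same cost whose complexity is at most the
  number of cells.\<close>

section \<open>Cells of a finite set of breakpoints\<close>

definition left_break :: "'a::linorder set \<Rightarrow> 'a \<Rightarrow> 'a" where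
  "left_break E t = Max {e\<in>E. e < t}"

definition right_break :: "'a::linorder set \<Rightarrow> 'a \<Rightarrow> 'a" where
  "right_break E t = Min {e\<in>E. t < e}"

definition cell_mid :: "real set \<Rightarrow> real \<Rightarrow> real" where
  "cell_mid E t = (left_break E t + right_break E t) / 2"

lemma left_break:
  assumes "finite E" "x \<in> E" "x < t"
  shows "left_break E t \<in> E" "left_break E t < t" "x \<le> left_break E t"
proof -
  have S: "finite {e\<in>E. e < t}" "x \<in> {e\<in>E. e < t}" using assms by auto
  show "left_break E t \<in> E" "left_break E t < t"
    using Max_in[OF S(1)] S(2) unfolding left_break_def by auto
  show "x \<le> left_break E t" using Max_ge[OF S] unfolding left_break_def .
qed

lemma right_break:
  assumes "finite E" "x \<in> E" "t < x"
  shows "right_break E t \<in> E" "t < right_break E t" "right_break E t \<le> x"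
proof -
  have S: "finite {e\<in>E. t < e}" "x \<in> {e\<in>E. t < e}" using assms by auto
  show "right_break E t \<in> E" "t < right_break E t"
    using Min_in[OF S(1)] S(2) unfolding right_break_def by auto
  show "right_break E t \<le> x" using Min_le[OF S] unfolding right_break_def .
qed

locale breakpoints =
  fixes E :: "real set" and a b :: real
  assumes finite_breaks: "finite E" and breaks_within: "E \<subseteq> {a..b}"
    and left_end: "a \<in> E" and right_end: "b \<in> E"
begin

abbreviation "lo \<equiv> left_break E"
abbreviation "hi \<equiv> right_break E"

lemma cell_bounds:
  assumes "t \<in> {a..b} - E"
  shows "lo t \<in> E" "hi t \<in> E" "lo t < t" "t < hi t"
proof -
  have "a < t" "t < b" using assms left_end right_end by (auto simp: order_le_less)
  then show "lo t \<in> E" "hi t \<in> E" "lo t < t" "t < hi t"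
    using left_break[OF finite_breaks left_end] right_break[OF finite_breaks right_end] by auto
qed

lemma breaks_outside_cell:
  assumes "t \<in> {a..b} - E" "e \<in> E"
  shows "e \<le> lo t \<or> hi t \<le> e"
  using assms left_break[OF finite_breaks, of e t] right_break[OF finite_breaks, of e t]
  by (cases e t rule: linorder_cases) auto

lemma cell_within:
  assumes "t \<in> {a..b} - E"
  shows "{lo t..hi t} \<subseteq> {a..b}"
  using cell_bounds[OF assms] breaks_within by auto

lemma same_cell:
  assumes t: "t \<in> {a..b} - E" and t': "t' \<in> {lo t<..<hi t}"
  shows "t' \<in> {a..b} - E" "lo t' = lo t" "hi t' = hi t"
proof -
  note bounds = cell_bounds[OF t]
  have "t' \<notin> E" using t' breaks_outside_cell[OF t, of t'] by auto
  then show t'E: "t' \<in> {a..b} - E" using t' cell_within[OF t] by auto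
  note bounds' = cell_bounds[OF t'E]
  have "lo t \<le> lo t'" "hi t' \<le> hi t"
    using t' left_break(3)[OF finite_breaks bounds(1)] right_break(3)[OF finite_breaks bounds(2)]
    by auto
  moreover have "lo t' \<le> lo t" "hi t \<le> hi t'"
    using t' bounds' breaks_outside_cell[OF t, of "lo t'"] breaks_outside_cell[OF t, of "hi t'"]
    by auto
  ultimately show "lo t' = lo t" "hi t' = hi t" by auto
qed

lemma cell_mid_in_cell:
  assumes "t \<in> {a..b} - E"
  shows "cell_mid E t \<in> {lo t<..<hi t}"
  using cell_bounds[OF assms] unfolding cell_mid_def by auto

lemma cell_mid_in_range: "t \<in> {a..b} - E \<Longrightarrow> cell_mid E t \<in> {a..b} - E"
  using same_cell(1) cell_mid_in_cell by blast

lemma cell_mid_same_cell: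
  assumes "t \<in> {a..b} - E" "t' \<in> {lo t<..<hi t}"
  shows "cell_mid E t' = cell_mid E t"
  using same_cell[OF assms] unfolding cell_mid_def by simp

definition break_seq :: "nat \<Rightarrow> real" where
  "break_seq j = sorted_list_of_set E ! j"

lemma break_seq_less: "i < j \<Longrightarrow> j < card E \<Longrightarrow> break_seq i < break_seq j"
  unfolding break_seq_def
  by (metis finite_breaks length_sorted_list_of_set sorted_wrt_nth_less strict_sorted_list_of_set)

lemma break_seq_in: "j < card E \<Longrightarrow> break_seq j \<in> E"
  unfolding break_seq_def
  by (metis finite_breaks length_sorted_list_of_set nth_mem set_sorted_list_of_set)

lemma break_seq_onto: "e \<in> E \<Longrightarrow> \<exists>j<card E. e = break_seq j"
  unfolding break_seq_def using finite_breaks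
  by (metis in_set_conv_nth length_sorted_list_of_set set_sorted_list_of_set)

lemma break_seq_le: "i \<le> j \<Longrightarrow> j < card E \<Longrightarrow> break_seq i \<le> break_seq j"
  using break_seq_less[of i j] by (cases "i = j") auto

lemma break_seq_between:
  assumes j: "Suc j < card E" and e: "e \<in> E"
  shows "e \<le> break_seq j \<or> break_seq (Suc j) \<le> e"
proof -
  obtain k where k: "k < card E" "e = break_seq k" using break_seq_onto[OF e] by blast
  then show ?thesis
    using break_seq_le[of k j] break_seq_le[of "Suc j" k] j by (cases "k \<le> j") auto
qed

lemma break_seq_ends: "break_seq 0 = a" "break_seq (card E - 1) = b"
proof -
  have E: "0 < card E" using finite_breaks left_end card_gt_0_iff by blast
  obtain i k where "i < card E" "a = break_seq i" "k < card E" "b = break_seq k"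
    using break_seq_onto[OF left_end] break_seq_onto[OF right_end] by blast
  then have "break_seq 0 \<le> a" "b \<le> break_seq (card E - 1)"
    using break_seq_le[of 0 i] break_seq_le[of k "card E - 1"] by auto
  moreover have "a \<le> break_seq 0" "break_seq (card E - 1) \<le> b"
    using break_seq_in[of 0] break_seq_in[of "card E - 1"] E breaks_within by auto
  ultimately show "break_seq 0 = a" "break_seq (card E - 1) = b" by auto
qed

lemma cell_of_break_seq:
  assumes j: "Suc j < card E" and t: "t \<in> {break_seq j<..<break_seq (Suc j)}"
  shows "t \<in> {a..b} - E" "lo t = break_seq j" "hi t = break_seq (Suc j)"
proof -
  have ends: "break_seq j \<in> E" "break_seq (Suc j) \<in> E"
    using break_seq_in j by auto
  then have "a \<le> break_seq j" "break_seq (Suc j) \<le> b" using breaks_within by auto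
  moreover have "t \<notin> E" using t break_seq_between[OF j, of t] by auto
  ultimately show tE: "t \<in> {a..b} - E" using t by auto
  have "break_seq j \<le> lo t" "hi t \<le> break_seq (Suc j)"
    using t left_break(3)[OF finite_breaks ends(1)] right_break(3)[OF finite_breaks ends(2)] by auto
  moreover have "lo t \<le> break_seq j" "break_seq (Suc j) \<le> hi t"
    using break_seq_between[OF j, of "lo t"] break_seq_between[OF j, of "hi t"] cell_bounds[OF tE] t
    by auto
  ultimately show "lo t = break_seq j" "hi t = break_seq (Suc j)" by auto
qed

lemma complexity_le_cellwise:
  assumes const: "\<forall>t\<in>{a..b} - E. T t = T (cell_mid E t)"
    and lin: "\<forall>t\<in>{a..b} - E. \<exists>m c. \<forall>v\<in>{lo t<..<hi t}. f (T t) v = m * v + c"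
  shows "complexity_le a b f T (card E - 1)"
  unfolding complexity_le_def
proof (intro exI[of _ break_seq] conjI allI impI)
  show "break_seq 0 = a" "break_seq (card E - 1) = b" by (fact break_seq_ends)+
  fix j assume "j < card E - 1"
  then have j: "Suc j < card E" by simp
  then show "break_seq j < break_seq (Suc j)" by (simp add: break_seq_less)
  define u where "u = (break_seq j + break_seq (Suc j)) / 2"
  have u: "u \<in> {break_seq j<..<break_seq (Suc j)}"
    using break_seq_less[OF lessI j] unfolding u_def by auto
  obtain m c where mc: "\<forall>v\<in>{lo u<..<hi u}. f (T u) v = m * v + c"
    using lin cell_of_break_seq(1)[OF j u] by blast
  have "T t = T u \<and> f (T u) t = m * t + c" if t: "t \<in> {break_seq j<..<break_seq (Suc j)}" for t
  proof -
    have "cell_mid E t = cell_mid E u"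
      using cell_of_break_seq[OF j t] cell_of_break_seq[OF j u] unfolding cell_mid_def by simp
    then have "T t = T u"
      using const cell_of_break_seq(1)[OF j t] cell_of_break_seq(1)[OF j u] by metis
    moreover have "t \<in> {lo u<..<hi u}"
      using t cell_of_break_seq(2,3)[OF j u] by simp
    ultimately show ?thesis using mc by simp
  qed
  then show "\<exists>e m c. \<forall>t\<in>{break_seq j<..<break_seq (Suc j)}. T t = e \<and> f e t = m * t + c"
    by (intro exI[of _ "T u"] exI[of _ m] exI[of _ c] ballI) simp
qed

end

section \<open>Trajectoids on crossing-free cells\<close>

lemma trajectoid_less: "trajectoid n a b f T \<Longrightarrow> t \<in> {a..b} \<Longrightarrow> T t < n"
  unfolding trajectoid_def by blast

lemma Dist_cong: "f \<sigma> t = f \<psi> t \<Longrightarrow> Dist n f \<sigma> t = Dist n f \<psi> t"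
  unfolding Dist_def by simp

text \<open>By connectedness of \<open>{x<..<y}\<close>: the curve followed by \<open>T\<close>, restricted to \<open>[x, y]\<close>,
  is locally constant there, because near any time \<open>T\<close> only uses entities meeting the current one.\<close>

lemma trajectoid_follows_one_curve:
  assumes T: "trajectoid n a b f T" and sub: "{x..y} \<subseteq> {a..b}"
    and meet: "\<And>u e1 e2. u \<in> {x<..<y} \<Longrightarrow> e1 < n \<Longrightarrow> e2 < n \<Longrightarrow> f e1 u = f e2 u \<Longrightarrow>
                 \<forall>v\<in>{x..y}. f e1 v = f e2 v"
    and u: "u \<in> {x<..<y}" and w: "w \<in> {x<..<y}" and v: "v \<in> {x..y}"
  shows "f (T u) v = f (T w) v"
proof -
  let ?A = "{x<..<y}"
  have "restrict (f (T u)) {x..y} = restrict (f (T w)) {x..y}"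
  proof (rule connected_local_const[OF _ u w])
    show "connected ?A" by simp
    show "\<forall>p\<in>?A. eventually (\<lambda>q. restrict (f (T p)) {x..y} = restrict (f (T q)) {x..y}) (at p within ?A)"
    proof
      fix p assume p: "p \<in> ?A"
      then have pab: "p \<in> {a..b}" using sub by auto
      then obtain d where d: "d > 0" "\<forall>q\<in>{a..b}. \<bar>q - p\<bar> < d \<longrightarrow> f (T q) p = f (T p) p"
        using T unfolding trajectoid_def by blast
      show "eventually (\<lambda>q. restrict (f (T p)) {x..y} = restrict (f (T q)) {x..y}) (at p within ?A)"
        unfolding eventually_at
      proof (intro exI[of _ d] conjI ballI impI)
        fix q assume q: "q \<in> ?A" "q \<noteq> p \<and> dist q p < d"
        then have "q \<in> {a..b}" using sub by auto
        then have "T q < n" "f (T q) p = f (T p) p"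
          using T d q trajectoid_less[OF T] by (auto simp: dist_real_def)
        then have "\<forall>v\<in>{x..y}. f (T p) v = f (T q) v"
          using meet[OF p] trajectoid_less[OF T pab] by metis
        then show "restrict (f (T p)) {x..y} = restrict (f (T q)) {x..y}" by auto
      qed (fact d)
    qed
  qed
  then show ?thesis using v by (metis restrict_apply')
qed

definition cell_normalize :: "real set \<Rightarrow> (real \<Rightarrow> nat) \<Rightarrow> real \<Rightarrow> nat" where
  "cell_normalize E T t = (if t \<in> E then T t else T (cell_mid E t))"

locale crossing_free_cells = breakpoints +
  fixes n :: nat and f :: "nat \<Rightarrow> real \<Rightarrow> real"
  assumes meet_on_cell: "\<And>u e1 e2. u \<in> {a..b} - E \<Longrightarrow> e1 < n \<Longrightarrow> e2 < n \<Longrightarrow> f e1 u = f e2 u \<Longrightarrow>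
             \<forall>v\<in>{lo u..hi u}. f e1 v = f e2 v"
begin

lemma trajectoid_follows_cell_mid:
  assumes T: "trajectoid n a b f T" and u: "u \<in> {a..b} - E" and v: "v \<in> {lo u..hi u}"
  shows "f (T u) v = f (T (cell_mid E u)) v"
proof (rule trajectoid_follows_one_curve[OF T cell_within[OF u] _ _ cell_mid_in_cell[OF u] v])
  show "u \<in> {lo u<..<hi u}" using cell_bounds[OF u] by simp
  fix w e1 e2 assume "w \<in> {lo u<..<hi u}" "e1 < n" "e2 < n" "f e1 w = f e2 w"
  then show "\<forall>v\<in>{lo u..hi u}. f e1 v = f e2 v"
    using meet_on_cell same_cell[OF u] by metis
qed

lemma cell_normalize_near_break:
  assumes T: "trajectoid n a b f T" and t: "t \<in> E"
  shows "\<exists>\<delta>>0. \<forall>s\<in>{a..b}. \<bar>s - t\<bar> < \<delta> \<longrightarrow> f (cell_normalize E T s) t = f (T t) t"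
proof -
  obtain g where g: "g > 0" "\<forall>e\<in>E. e \<noteq> t \<longrightarrow> g \<le> \<bar>e - t\<bar>"
    using islimpt_finite[OF finite_breaks, of t]
    unfolding islimpt_approachable dist_real_def by (auto simp: not_less)
  obtain d where d: "d > 0" "\<forall>s\<in>{a..b}. \<bar>s - t\<bar> < d \<longrightarrow> f (T s) t = f (T t) t"
    using T t breaks_within unfolding trajectoid_def by blast
  show ?thesis
  proof (intro exI[of _ "min g d"] conjI ballI impI)
    show "min g d > 0" using g d by simp
    fix s assume s: "s \<in> {a..b}" "\<bar>s - t\<bar> < min g d"
    show "f (cell_normalize E T s) t = f (T t) t"
    proof (cases "s \<in> E")
      case True
      then have "s = t" using g s by force
      then show ?thesis using t unfolding cell_normalize_def by simp
    next
      case False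
      then have sE: "s \<in> {a..b} - E" using s by simp
      \<comment> \<open>otherwise \<open>lo s\<close> or \<open>hi s\<close> would be a break closer to \<open>t\<close> than \<open>s\<close>\<close>
      have "\<not> t < lo s" "\<not> hi s < t"
        using g(2) cell_bounds[OF sE] s by (smt (verit))+
      then have "f (T s) t = f (T (cell_mid E s)) t"
        using trajectoid_follows_cell_mid[OF T sE] by simp
      then show ?thesis using d s False unfolding cell_normalize_def by simp
    qed
  qed
qed

lemma trajectoid_cell_normalize:
  assumes T: "trajectoid n a b f T"
  shows "trajectoid n a b f (cell_normalize E T)"
  unfolding trajectoid_def
proof
  fix t assume t: "t \<in> {a..b}"
  let ?N = "cell_normalize E T"
  have "?N t < n"
    using trajectoid_less[OF T] t cell_mid_in_range[of t] unfolding cell_normalize_def by auto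
  moreover have "\<exists>\<delta>>0. \<forall>s\<in>{a..b}. \<bar>s - t\<bar> < \<delta> \<longrightarrow> f (?N s) t = f (?N t) t"
  proof (cases "t \<in> E")
    case True
    then have "?N t = T t" unfolding cell_normalize_def by simp
    then show ?thesis using cell_normalize_near_break[OF T True] by simp
  next
    case False
    then have tE: "t \<in> {a..b} - E" using t by simp
    show ?thesis
    proof (intro exI[of _ "min (t - lo t) (hi t - t)"] conjI ballI impI)
      show "min (t - lo t) (hi t - t) > 0" using cell_bounds[OF tE] by simp
      fix s assume "s \<in> {a..b}" "\<bar>s - t\<bar> < min (t - lo t) (hi t - t)"
      then have s: "s \<in> {lo t<..<hi t}" by auto
      then show "f (?N s) t = f (?N t) t"
        using same_cell(1)[OF tE s] cell_mid_same_cell[OF tE s] False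
        unfolding cell_normalize_def by simp
    qed
  qed
  ultimately show "?N t < n \<and> (\<exists>\<delta>>0. \<forall>s\<in>{a..b}. \<bar>s - t\<bar> < \<delta> \<longrightarrow> f (?N s) t = f (?N t) t)" ..
qed

lemma traj_cost_cell_normalize:
  assumes T: "trajectoid n a b f T"
  shows "traj_cost n a b f (cell_normalize E T) = traj_cost n a b f T"
  unfolding traj_cost_def
proof (rule integral_spike[of E])
  show "negligible E" using finite_breaks by (rule negligible_finite)
  fix t assume t: "t \<in> {a..b} - E"
  have "f (T t) t = f (T (cell_mid E t)) t"
    using trajectoid_follows_cell_mid[OF T t] cell_bounds[OF t] by simp
  then show "Dist n f (T t) t = Dist n f (cell_normalize E T t) t"
    using t unfolding cell_normalize_def by (intro Dist_cong) simp
qed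

text \<open>The cost of a trajectoid only depends on the entities it uses at the finitely many cell
  midpoints, so only finitely many costs occur and a minimiser exists.\<close>

lemma finite_traj_costs: "finite (traj_cost n a b f ` {T. trajectoid n a b f T})"
proof -
  define M where "M = cell_mid E ` ({a..b} - E)"
  have "M \<subseteq> (\<lambda>(x, y). (x + y) / 2) ` (E \<times> E)"
  proof
    fix m assume "m \<in> M"
    then obtain t where t: "t \<in> {a..b} - E" "m = cell_mid E t" unfolding M_def by blast
    then show "m \<in> (\<lambda>(x, y). (x + y) / 2) ` (E \<times> E)"
      using cell_bounds[OF t(1)] unfolding cell_mid_def by force
  qed
  then have M: "finite M" using finite_breaks by (meson finite_SigmaI finite_imageI finite_subset)
  define cost where "cost c = integral {a..b} (\<lambda>t. Dist n f (c (cell_mid E t)) t)" for c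
  have "traj_cost n a b f T \<in> cost ` PiE M (\<lambda>_. {..<n})" if T: "trajectoid n a b f T" for T
  proof
    show "restrict T M \<in> PiE M (\<lambda>_. {..<n})"
      using trajectoid_less[OF T] cell_mid_in_range unfolding M_def by (auto simp: restrict_PiE_iff)
    show "traj_cost n a b f T = cost (restrict T M)"
      unfolding traj_cost_def cost_def
    proof (rule integral_spike[of E])
      show "negligible E" using finite_breaks by (rule negligible_finite)
      fix t assume t: "t \<in> {a..b} - E"
      have "f (T t) t = f (T (cell_mid E t)) t"
        using trajectoid_follows_cell_mid[OF T t] cell_bounds[OF t] by simp
      then show "Dist n f (restrict T M (cell_mid E t)) t = Dist n f (T t) t"
        using t unfolding M_def by (intro Dist_cong) simp
    qed
  qed
  then have "traj_cost n a b f ` {T. trajectoid n a b f T} \<subseteq> cost ` PiE M (\<lambda>_. {..<n})"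
    by blast
  then show ?thesis using M by (meson finite_PiE finite_imageI finite_lessThan finite_subset)
qed

lemma central_trajectory_cellwise:
  assumes "n \<ge> 1"
  shows "\<exists>T. central_trajectory n a b f T \<and> (\<forall>t\<in>{a..b} - E. T t = T (cell_mid E t))"
proof -
  let ?C = "traj_cost n a b f ` {T. trajectoid n a b f T}"
  have "trajectoid n a b f (\<lambda>_. 0)" using assms unfolding trajectoid_def by (auto intro: exI[of _ 1])
  then have "Min ?C \<in> ?C" using finite_traj_costs by (intro Min_in) auto
  then obtain T where T: "trajectoid n a b f T" "traj_cost n a b f T = Min ?C" by auto
  have minimal: "traj_cost n a b f T \<le> traj_cost n a b f T'" if "trajectoid n a b f T'" for T'
    using that T(2) Min_le[OF finite_traj_costs] by auto
  let ?N = "cell_normalize E T"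
  have "central_trajectory n a b f ?N"
    unfolding central_trajectory_def
    using trajectoid_cell_normalize[OF T(1)] traj_cost_cell_normalize[OF T(1)] minimal by simp
  moreover have "?N t = ?N (cell_mid E t)" if t: "t \<in> {a..b} - E" for t
    using cell_mid_in_range[OF t] cell_mid_same_cell[OF t cell_mid_in_cell[OF t]] t
    unfolding cell_normalize_def by simp
  ultimately show ?thesis by blast
qed

end

section \<open>The arrangement of piecewise linear trajectories\<close>

lemma affine_eq_if_eq_at_two_points:
  fixes g h :: "real \<Rightarrow> real"
  assumes g: "\<forall>v\<in>I. g v = m1 * v + c1" and h: "\<forall>v\<in>I. h v = m2 * v + c2"
    and xy: "x \<in> I" "y \<in> I" "x \<noteq> y" and eq: "g x = h x" "g y = h y"
  shows "\<forall>v\<in>I. g v = h v"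
proof -
  have "(m1 - m2) * (x - y) = 0" using g h xy eq by (simp add: algebra_simps)
  then have "m1 = m2" using xy by simp
  moreover have "c1 = c2" using g h xy eq \<open>m1 = m2\<close> by simp
  ultimately show ?thesis using g h by simp
qed

text \<open>Curves that coincide on \<open>I\<close> are deliberately given no meeting points, so that two
  affine curves have at most one.\<close>

definition meeting_points :: "(real \<Rightarrow> real) \<Rightarrow> (real \<Rightarrow> real) \<Rightarrow> real set \<Rightarrow> real set" where
  "meeting_points g h I = (if \<forall>v\<in>I. g v = h v then {} else {v\<in>I. g v = h v})"

lemma meeting_points_affine:
  fixes g h :: "real \<Rightarrow> real"
  assumes "\<forall>v\<in>I. g v = m1 * v + c1" "\<forall>v\<in>I. h v = m2 * v + c2"
  shows "finite (meeting_points g h I)" "card (meeting_points g h I) \<le> 1"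
proof -
  have single: "x = y" if "x \<in> meeting_points g h I" "y \<in> meeting_points g h I" for x y
    using that affine_eq_if_eq_at_two_points[OF assms, of x y]
    unfolding meeting_points_def by (auto split: if_splits)
  then have "meeting_points g h I = {} \<or> (\<exists>x. meeting_points g h I = {x})" by blast
  then show "finite (meeting_points g h I)" by auto
  then show "card (meeting_points g h I) \<le> 1" using single by (simp add: card_le_Suc0_iff_eq)
qed

lemma exists_vertex_interval:
  fixes tt :: "nat \<Rightarrow> real"
  assumes "tt 0 \<le> u" "u < tt k"
  shows "\<exists>i<k. tt i \<le> u \<and> u < tt (Suc i)"
  using assms
proof (induction k)
  case (Suc k)
  show ?case
  proof (cases "u < tt k")
    case True
    then show ?thesis using Suc by (meson less_SucI)
  next
    case False
    then show ?thesis using Suc.prems(2) by (intro exI[of _ k]) simp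
  qed
qed simp

definition event_times :: "nat \<Rightarrow> nat \<Rightarrow> (nat \<Rightarrow> real) \<Rightarrow> (nat \<Rightarrow> real \<Rightarrow> real) \<Rightarrow> real set" where
  "event_times n \<tau> tt f = tt ` {..\<tau>} \<union>
     (\<Union>(i, e1, e2) \<in> {..<\<tau>} \<times> {..<n} \<times> {..<n}. meeting_points (f e1) (f e2) {tt i..tt (Suc i)})"

lemma valid_inputD:
  assumes "valid_input n \<tau> tt f"
  shows "n \<ge> 1" "\<forall>i<\<tau>. tt i < tt (Suc i)"
    "\<forall>k<n. \<forall>i<\<tau>. \<exists>m c. \<forall>t\<in>{tt i..tt (Suc i)}. f k t = m * t + c"
proof -
  note conjuncts = assms[unfolded valid_input_def]
  from conjuncts show "n \<ge> 1" by (elim conjE)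
  from conjuncts show "\<forall>i<\<tau>. tt i < tt (Suc i)" by (elim conjE)
  from conjuncts show "\<forall>k<n. \<forall>i<\<tau>. \<exists>m c. \<forall>t\<in>{tt i..tt (Suc i)}. f k t = m * t + c"
    by (elim conjE)
qed

context
  fixes n \<tau> :: nat and tt :: "nat \<Rightarrow> real" and f :: "nat \<Rightarrow> real \<Rightarrow> real"
  assumes valid: "valid_input n \<tau> tt f"
begin

lemma piece_affine: "e < n \<Longrightarrow> i < \<tau> \<Longrightarrow> \<exists>m c. \<forall>v\<in>{tt i..tt (Suc i)}. f e v = m * v + c"
  using valid_inputD(3)[OF valid] by blast

lemma vertex_times_mono: "i \<le> j \<Longrightarrow> j \<le> \<tau> \<Longrightarrow> tt i \<le> tt j"
  by (rule lift_Suc_mono_le_ivl[of "{..<\<tau>}"]) (use valid_inputD(2)[OF valid] in auto)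

lemma finite_card_event_times:
  "finite (event_times n \<tau> tt f)" "card (event_times n \<tau> tt f) \<le> Suc \<tau> + \<tau> * n * n"
proof -
  define J where "J = {..<\<tau>} \<times> {..<n} \<times> {..<n}"
  define X where "X = (\<lambda>(i, e1, e2). meeting_points (f e1) (f e2) {tt i..tt (Suc i)})"
  have X: "finite (X j)" "card (X j) \<le> 1" if jJ: "j \<in> J" for j
  proof -
    obtain i e1 e2 where j: "j = (i, e1, e2)" "i < \<tau>" "e1 < n" "e2 < n"
      using jJ unfolding J_def by (cases j) auto
    obtain m1 c1 m2 c2 where "\<forall>v\<in>{tt i..tt (Suc i)}. f e1 v = m1 * v + c1"
      "\<forall>v\<in>{tt i..tt (Suc i)}. f e2 v = m2 * v + c2"
      using piece_affine j by metis
    from meeting_points_affine[OF this]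
    show "finite (X j)" "card (X j) \<le> 1" unfolding j(1) X_def by simp_all
  qed
  have "card (\<Union>(X ` J)) \<le> (\<Sum>j\<in>J. card (X j))" by (rule card_UN_le) (simp add: J_def)
  also have "\<dots> \<le> (\<Sum>j\<in>J. 1)" using X by (intro sum_mono) auto
  also have "\<dots> = \<tau> * n * n" by (simp add: J_def card_cartesian_product)
  finally have "card (\<Union>(X ` J)) \<le> \<tau> * n * n" .
  moreover have "card (tt ` {..\<tau>}) \<le> Suc \<tau>" using card_image_le[of "{..\<tau>}" tt] by simp
  moreover have E: "event_times n \<tau> tt f = tt ` {..\<tau>} \<union> \<Union>(X ` J)"
    unfolding event_times_def J_def X_def by simp
  then have "card (event_times n \<tau> tt f) \<le> card (tt ` {..\<tau>}) + card (\<Union>(X ` J))"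
    by (simp add: card_Un_le)
  ultimately show "card (event_times n \<tau> tt f) \<le> Suc \<tau> + \<tau> * n * n" by linarith
  show "finite (event_times n \<tau> tt f)" using X unfolding E by (auto simp: J_def)
qed

lemma event_times_breakpoints: "breakpoints (event_times n \<tau> tt f) (tt 0) (tt \<tau>)"
proof
  show "finite (event_times n \<tau> tt f)" by (fact finite_card_event_times)
  show "tt 0 \<in> event_times n \<tau> tt f" "tt \<tau> \<in> event_times n \<tau> tt f"
    unfolding event_times_def by auto
  show "event_times n \<tau> tt f \<subseteq> {tt 0..tt \<tau>}"
  proof
    fix x assume "x \<in> event_times n \<tau> tt f"
    then consider (vertex) i where "i \<le> \<tau>" "x = tt i"
      | (crossing) i e1 e2 where "i < \<tau>" "x \<in> meeting_points (f e1) (f e2) {tt i..tt (Suc i)}"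
      unfolding event_times_def by blast
    then show "x \<in> {tt 0..tt \<tau>}"
    proof cases
      case vertex
      then show ?thesis using vertex_times_mono[of 0 i] vertex_times_mono[of i \<tau>] by simp
    next
      case crossing
      then have "x \<in> {tt i..tt (Suc i)}" unfolding meeting_points_def by (simp split: if_splits)
      then show ?thesis
        using crossing(1) vertex_times_mono[of 0 i] vertex_times_mono[of "Suc i" \<tau>] by simp
    qed
  qed
qed

lemma meeting_points_in_event_times:
  assumes "i < \<tau>" "e1 < n" "e2 < n"
  shows "meeting_points (f e1) (f e2) {tt i..tt (Suc i)} \<subseteq> event_times n \<tau> tt f"
proof -
  have "(i, e1, e2) \<in> {..<\<tau>} \<times> {..<n} \<times> {..<n}" using assms by simp
  from UN_upper[OF this, of "\<lambda>(i, e1, e2). meeting_points (f e1) (f e2) {tt i..tt (Suc i)}"]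
  show ?thesis unfolding event_times_def by auto
qed

interpretation events: breakpoints "event_times n \<tau> tt f" "tt 0" "tt \<tau>"
  by (fact event_times_breakpoints)

lemma cell_in_vertex_interval:
  assumes u: "u \<in> {tt 0..tt \<tau>} - event_times n \<tau> tt f"
  obtains i where "i < \<tau>" "{events.lo u..events.hi u} \<subseteq> {tt i..tt (Suc i)}"
proof -
  have "u \<noteq> tt \<tau>" using u unfolding event_times_def by auto
  then obtain i where i: "i < \<tau>" "tt i \<le> u" "u < tt (Suc i)"
    using u exists_vertex_interval[of tt u \<tau>] by auto
  have ends: "tt i \<in> event_times n \<tau> tt f" "tt (Suc i) \<in> event_times n \<tau> tt f"
    using i unfolding event_times_def by auto
  then have "tt i < u" using u i by (metis DiffD2 order_le_less)
  then have "tt i \<le> events.lo u" "events.hi u \<le> tt (Suc i)"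
    using left_break(3)[OF events.finite_breaks ends(1)] right_break(3)[OF events.finite_breaks ends(2)] i
    by auto
  then show ?thesis using that i by auto
qed

lemma event_times_crossing_free: "crossing_free_cells (event_times n \<tau> tt f) (tt 0) (tt \<tau>) n f"
proof (unfold_locales, intro ballI)
  fix u e1 e2 v
  assume u: "u \<in> {tt 0..tt \<tau>} - event_times n \<tau> tt f" and e: "e1 < n" "e2 < n"
    and meet: "f e1 u = f e2 u" and v: "v \<in> {events.lo u..events.hi u}"
  obtain i where i: "i < \<tau>" "{events.lo u..events.hi u} \<subseteq> {tt i..tt (Suc i)}"
    using cell_in_vertex_interval[OF u] .
  show "f e1 v = f e2 v"
  proof (cases "\<forall>v\<in>{tt i..tt (Suc i)}. f e1 v = f e2 v")
    case True
    then show ?thesis using i(2) v by blast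
  next
    case False
    have "u \<in> {tt i..tt (Suc i)}" using i(2) events.cell_bounds[OF u] by auto
    then have "u \<in> meeting_points (f e1) (f e2) {tt i..tt (Suc i)}"
      using False meet unfolding meeting_points_def by simp
    then show ?thesis using u meeting_points_in_event_times[OF i(1) e] by blast
  qed
qed

lemma affine_on_cells:
  assumes "u \<in> {tt 0..tt \<tau>} - event_times n \<tau> tt f" "e < n"
  shows "\<exists>m c. \<forall>v\<in>{events.lo u<..<events.hi u}. f e v = m * v + c"
proof -
  obtain i where i: "i < \<tau>" "{events.lo u..events.hi u} \<subseteq> {tt i..tt (Suc i)}"
    using cell_in_vertex_interval[OF assms(1)] .
  obtain m c where "\<forall>v\<in>{tt i..tt (Suc i)}. f e v = m * v + c"
    using piece_affine[OF assms(2) i(1)] by blast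
  then have "\<forall>v\<in>{events.lo u<..<events.hi u}. f e v = m * v + c" using i(2) by auto
  then show ?thesis by blast
qed

lemma card_event_times_bound: "real (card (event_times n \<tau> tt f) - 1) \<le> 2 * real \<tau> * (real n)\<^sup>2"
proof -
  have "1 \<le> n * n" using valid_inputD(1)[OF valid] by simp
  then have "\<tau> \<le> \<tau> * n * n" by (metis mult.assoc mult.right_neutral mult_le_mono2)
  then have "card (event_times n \<tau> tt f) - 1 \<le> \<tau> * n * n + \<tau> * n * n"
    using finite_card_event_times(2) by linarith
  also have "\<dots> = 2 * \<tau> * n\<^sup>2" by (simp add: power2_eq_square)
  finally have "card (event_times n \<tau> tt f) - 1 \<le> 2 * \<tau> * n\<^sup>2" .
  then show ?thesis by (metis of_nat_le_iff of_nat_mult of_nat_numeral of_nat_power)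
qed

end


theorem mainTheorem17:
  shows "\<exists>C::real. \<forall>n \<tau> (tt::nat \<Rightarrow> real) (f::nat \<Rightarrow> real \<Rightarrow> real).
           valid_input n \<tau> tt f \<longrightarrow>
           (\<exists>T. central_trajectory n (tt 0) (tt \<tau>) f T \<and>
                (\<exists>k. complexity_le (tt 0) (tt \<tau>) f T k \<and> real k \<le> C * real \<tau> * (real n)^2))"
proof (rule exI[of _ 2], intro allI impI)
  fix n \<tau> and tt :: "nat \<Rightarrow> real" and f :: "nat \<Rightarrow> real \<Rightarrow> real"
  assume valid: "valid_input n \<tau> tt f"
  let ?E = "event_times n \<tau> tt f"
  interpret crossing_free_cells ?E "tt 0" "tt \<tau>" n f
    using event_times_crossing_free[OF valid] .
  obtain T where central: "central_trajectory n (tt 0) (tt \<tau>) f T"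
    and cellwise: "\<forall>t\<in>{tt 0..tt \<tau>} - ?E. T t = T (cell_mid ?E t)"
    using central_trajectory_cellwise valid_inputD(1)[OF valid] by blast
  have "complexity_le (tt 0) (tt \<tau>) f T (card ?E - 1)"
  proof (rule complexity_le_cellwise[OF cellwise], intro ballI)
    fix t assume t: "t \<in> {tt 0..tt \<tau>} - ?E"
    have "T t < n" using central t trajectoid_less unfolding central_trajectory_def by blast
    then show "\<exists>m c. \<forall>v\<in>{lo t<..<hi t}. f (T t) v = m * v + c" by (rule affine_on_cells[OF valid t])
  qed
  then show "\<exists>T. central_trajectory n (tt 0) (tt \<tau>) f T \<and>
      (\<exists>k. complexity_le (tt 0) (tt \<tau>) f T k \<and> real k \<le> 2 * real \<tau> * (real n)^2)"
    using central card_event_times_bound[OF valid] by blast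
qed

end
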